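(* Let $A=\mathrm{diag}(\lambda_1,\dots,\lambda_k)$ with distinct real $\lambda_j$, $|\lambda_j|>1$, let $h\ne0$, $p\ge0$, and let $\bar\Gamma\in\mathbb R^{1\times k}$ be a row vector with all entries nonzero. Let $\tilde J$ be the unique solution of $$\tilde J=A^{-1}\tilde JA^{-T}-\frac{\bar\Gamma^T\bar\Gamma}{1+h^2p}+A^{-1}\bar\Gamma^T\bar\Gamma A^{-T}.$$ Then, with $D_\Gamma=\mathrm{diag}(\bar\Gamma)$ (the diagonal matrix with the entries of $\bar\Gamma$ on its diagonal) and $M$ the solution of $M=A^{-1}MA^{-T}+\mathbf 1\mathbf 1^T$, $$\tilde J=D_\Gamma\Big(\frac{h^2p}{1+h^2p}M-\mathbf 1\mathbf 1^T\Big)D_\Gamma,$$ and $\tilde J\succ0$ if and only if $1+h^2p>|\det A|^2$, i.e. $\sum_{j=1}^k\log|\lambda_j|<\tfrac12\log(1+h^2p)$.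
   Context: $\mathbf 1\in\mathbb R^k$ denotes the all-ones vector. *)

theory Defs
  imports "HOL-Analysis.Analysis"
begin

definition diag_mat :: "real^'k \<Rightarrow> real^'k^'k" where
  "diag_mat v = (\<chi> i j. if i = j then v $ i else 0)"

text \<open>Outer product u v^T (for the row vector Gamma, Gamma^T Gamma = outer g g).\<close>
definition outer :: "real^'k \<Rightarrow> real^'k \<Rightarrow> real^'k^'k" where
  "outer u v = (\<chi> i j. u $ i * v $ j)"

definition ones_mat :: "real^'k^'k" where
  "ones_mat = (\<chi> i j. 1)"

definition pos_def :: "real^'k^'k \<Rightarrow> bool" where
  "pos_def J \<longleftrightarrow> transpose J = J \<and> (\<forall>x. x \<noteq> 0 \<longrightarrow> x \<bullet> (J *v x) > 0)"

end

theory Submission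
  imports Defs "HOL-Computational_Algebra.Polynomial"
begin

text \<open>
  Put a_i = 1/lambda_i. For diagonal A the Stein equation X = A^-1 X A^-T + C is solved entrywise
  by X_ij = C_ij / (1 - a_i a_j), which gives the closed form of J. In the variable y = D_Gamma x
  its quadratic form is e Q(y) - (sum_i y_i)^2, where e = h^2 p / (1 + h^2 p) and
  Q(y) = sum_ij y_i y_j / (1 - a_i a_j) = sum_n (sum_i y_i a_i^n)^2 is positive definite because
  the a_i are distinct (Vandermonde). So J is positive definite iff e exceeds the maximum of
  (sum_i y_i)^2 / Q(y). By Cauchy-Schwarz for Q this maximum is attained at the solution w of
  M w = 1 and equals sum_i w_i. Finally sum_i w_i = 1 - prod_i a_i^2: with beta = prod_l (-a_l),
  the polynomials sum_i w_i prod_(l ~= i) (1 - a_l z) + beta prod_l (z - a_l) and prod_l (1 - a_l z)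
  have degree k, the same coefficient of z^k and agree at the k points a_j, so they coincide;
  now evaluate at z = 0.
\<close>

definition cauchy_form :: "real^'k \<Rightarrow> real^'k \<Rightarrow> real" where
  "cauchy_form a x = (\<Sum>i\<in>UNIV. \<Sum>j\<in>UNIV. x$i * x$j / (1 - a$i * a$j))"

lemma abs_mult_less_one:
  fixes a :: "real^'k"
  assumes "\<And>i. \<bar>a$i\<bar> < 1"
  shows "\<bar>a$i * a$j\<bar> < 1"
  using abs_mult_less[OF assms[of i] assms[of j]] by (simp add: abs_mult)

lemma one_minus_mult_pos:
  fixes a :: "real^'k"
  assumes "\<And>i. \<bar>a$i\<bar> < 1"
  shows "1 - a$i * a$j > 0"
  using abs_mult_less_one[OF assms, of i j] by linarith

lemma cauchy_form_sums:
  assumes "\<And>i. \<bar>a$i\<bar> < 1"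
  shows "(\<lambda>n. (\<Sum>i\<in>UNIV. x$i * a$i^n)\<^sup>2) sums cauchy_form a x"
proof -
  have "(\<lambda>n. \<Sum>i\<in>UNIV. \<Sum>j\<in>UNIV. x$i * x$j * (a$i * a$j)^n)
      sums (\<Sum>i\<in>UNIV. \<Sum>j\<in>UNIV. x$i * x$j * (1 / (1 - a$i * a$j)))"
    using abs_mult_less_one[OF assms] by (intro sums_sum sums_mult geometric_sums) simp
  moreover have "(\<Sum>i\<in>UNIV. x$i * a$i^n)\<^sup>2 = (\<Sum>i\<in>UNIV. \<Sum>j\<in>UNIV. x$i * x$j * (a$i * a$j)^n)" for n
    by (simp add: power2_eq_square sum_product power_mult_distrib mult_ac)
  ultimately show ?thesis by (simp add: cauchy_form_def)
qed

lemma cauchy_form_nonneg: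
  assumes "\<And>i. \<bar>a$i\<bar> < 1"
  shows "cauchy_form a x \<ge> 0"
proof -
  let ?f = "\<lambda>n. (\<Sum>i\<in>UNIV. x$i * a$i^n)\<^sup>2"
  have "summable ?f" and "suminf ?f = cauchy_form a x"
    using cauchy_form_sums[OF assms] by (simp_all add: sums_iff)
  moreover have "0 \<le> suminf ?f"
    using \<open>summable ?f\<close> by (rule suminf_nonneg) simp
  ultimately show ?thesis by simp
qed

lemma power_sums_eq_0_imp_eq_0:
  fixes a x :: "real^'k"
  assumes inj: "inj (($) a)" and z: "\<And>n. (\<Sum>i\<in>UNIV. x$i * a$i^n) = 0"
  shows "x = 0"
proof -
  have "x$j = 0" for j
  proof -
    define p where "p = (\<Prod>i\<in>UNIV-{j}. [:- a$i, 1:])"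
    have poly_p: "poly p z = (\<Prod>i\<in>UNIV-{j}. z - a$i)" for z
      unfolding p_def by (simp add: poly_prod)
    have "(\<Sum>i\<in>UNIV-{j}. x$i * poly p (a$i)) = 0"
    proof (rule sum.neutral, rule ballI)
      fix i assume "i \<in> UNIV - {j}"
      then have "poly p (a$i) = 0" unfolding poly_p by (intro prod_zero) auto
      then show "x$i * poly p (a$i) = 0" by simp
    qed
    then have "x$j * poly p (a$j) = (\<Sum>i\<in>UNIV. x$i * poly p (a$i))"
      by (simp add: sum.remove[of UNIV j])
    also have "\<dots> = (\<Sum>i\<in>UNIV. \<Sum>n\<le>degree p. coeff p n * (x$i * a$i^n))"
      by (simp add: poly_altdef sum_distrib_left mult_ac)
    also have "\<dots> = (\<Sum>n\<le>degree p. coeff p n * (\<Sum>i\<in>UNIV. x$i * a$i^n))"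
      by (subst sum.swap) (simp add: sum_distrib_left)
    also have "\<dots> = 0" using z by simp
    finally have "x$j * poly p (a$j) = 0" .
    moreover have "poly p (a$j) \<noteq> 0"
      unfolding poly_p using inj by (simp add: inj_eq)
    ultimately show ?thesis by simp
  qed
  then show ?thesis by (simp add: vec_eq_iff)
qed

lemma cauchy_form_pos:
  assumes "\<And>i. \<bar>a$i\<bar> < 1" and "inj (($) a)" and "x \<noteq> 0"
  shows "cauchy_form a x > 0"
proof -
  let ?f = "\<lambda>n. (\<Sum>i\<in>UNIV. x$i * a$i^n)\<^sup>2"
  have "cauchy_form a x \<noteq> 0"
  proof
    assume "cauchy_form a x = 0"
    moreover have "summable ?f" and "suminf ?f = cauchy_form a x"
      using cauchy_form_sums[OF assms(1)] by (simp_all add: sums_iff)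
    ultimately have "?f n = 0" for n
      using suminf_eq_zero_iff[of ?f] by simp
    then have "(\<Sum>i\<in>UNIV. x$i * a$i^n) = 0" for n
      by simp
    with power_sums_eq_0_imp_eq_0 assms(2,3) show False by blast
  qed
  with cauchy_form_nonneg[OF assms(1), of x] show ?thesis by linarith
qed

lemma cauchy_form_eq_inner:
  "cauchy_form a x = x \<bullet> ((\<chi> i j. 1 / (1 - a$i * a$j)) *v x)"
  unfolding cauchy_form_def inner_vec_def matrix_vector_mult_def
  by (simp add: sum_distrib_left mult_ac)

lemma cauchy_system_solvable:
  fixes a :: "real^'k"
  assumes lt: "\<And>i. \<bar>a$i\<bar> < 1" and inj: "inj (($) a)"
  obtains w where "\<And>j. (\<Sum>i\<in>UNIV. w$i / (1 - a$j * a$i)) = 1"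
proof -
  let ?K = "(\<chi> i j. 1 / (1 - a$i * a$j)) :: real^'k^'k"
  have "inj ((*v) ?K)"
  proof (rule injI)
    fix x y assume "?K *v x = ?K *v y"
    then have "cauchy_form a (x - y) = 0"
      by (simp add: cauchy_form_eq_inner matrix_vector_mult_diff_distrib)
    then show "x = y" using cauchy_form_pos[OF lt inj, of "x - y"] by fastforce
  qed
  then have "surj ((*v) ?K)"
    by (intro linear_inj_imp_surj matrix_vector_mul_linear)
  then obtain w where "?K *v w = (\<chi> i. 1)" by (metis surjE)
  then show ?thesis
    by (intro that[of w]) (auto simp: vec_eq_iff matrix_vector_mult_def)
qed

definition cauchy_interpolant :: "real^'k \<Rightarrow> real^'k \<Rightarrow> real poly" where
  "cauchy_interpolant a w = (\<Sum>i\<in>UNIV. smult (w$i) (\<Prod>l\<in>UNIV-{i}. [:1, - a$l:]))"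

lemma degree_cauchy_interpolant_less:
  fixes a w :: "real^'k"
  shows "degree (cauchy_interpolant a w) < CARD('k)"
  unfolding cauchy_interpolant_def
proof (intro degree_sum_less)
  fix i :: 'k
  have "degree (\<Prod>l\<in>UNIV-{i}. [:1, - a$l:]) \<le> (\<Sum>l\<in>UNIV-{i}. degree [:1, - a$l:])"
    by (rule degree_prod_sum_le[simplified comp_def]) simp
  also have "\<dots> \<le> (\<Sum>l\<in>UNIV-{i}. 1)" by (intro sum_mono) simp
  also have "\<dots> < CARD('k)" by (simp add: card_Diff_singleton)
  finally show "degree (smult (w$i) (\<Prod>l\<in>UNIV-{i}. [:1, - a$l:])) < CARD('k)"
    using degree_smult_le le_less_trans by blast
qed simp

lemma poly_cauchy_interpolant_node:
  fixes a w :: "real^'k"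
  assumes lt: "\<And>i. \<bar>a$i\<bar> < 1"
    and w: "\<And>j. (\<Sum>i\<in>UNIV. w$i / (1 - a$j * a$i)) = 1"
  shows "poly (cauchy_interpolant a w) (a$j) = (\<Prod>l\<in>UNIV. 1 - a$l * a$j)"
proof -
  let ?P = "\<Prod>l\<in>UNIV. 1 - a$l * a$j"
  have "poly (cauchy_interpolant a w) (a$j) = (\<Sum>i\<in>UNIV. w$i * (\<Prod>l\<in>UNIV-{i}. 1 - a$l * a$j))"
    unfolding cauchy_interpolant_def by (simp add: poly_sum poly_prod algebra_simps)
  also have "\<dots> = (\<Sum>i\<in>UNIV. ?P * (w$i / (1 - a$j * a$i)))"
  proof (rule sum.cong)
    fix i
    have "1 - a$j * a$i \<noteq> 0" using one_minus_mult_pos[OF lt, of j i] by simp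
    moreover have "?P = (1 - a$i * a$j) * (\<Prod>l\<in>UNIV-{i}. 1 - a$l * a$j)"
      by (simp add: prod.remove[of UNIV i])
    ultimately show "w$i * (\<Prod>l\<in>UNIV-{i}. 1 - a$l * a$j) = ?P * (w$i / (1 - a$j * a$i))"
      by (simp add: mult.commute)
  qed simp
  also have "\<dots> = ?P * (\<Sum>i\<in>UNIV. w$i / (1 - a$j * a$i))"
    by (rule sum_distrib_left[symmetric])
  finally show ?thesis using w[of j] by simp
qed

lemma cauchy_interpolant_identity:
  fixes a w :: "real^'k"
  assumes lt: "\<And>i. \<bar>a$i\<bar> < 1" and inj: "inj (($) a)" and nz: "\<And>i. a$i \<noteq> 0"
    and w: "\<And>j. (\<Sum>i\<in>UNIV. w$i / (1 - a$j * a$i)) = 1"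
  shows "cauchy_interpolant a w + smult (\<Prod>l\<in>UNIV. - a$l) (\<Prod>l\<in>UNIV. [:- a$l, 1:])
       = (\<Prod>l\<in>UNIV. [:1, - a$l:])"
    (is "?H + smult ?\<beta> ?R = ?P")
proof -
  let ?k = "CARD('k)"
  have deg_P: "degree ?P = ?k" and deg_R: "degree ?R = ?k"
    using nz by (subst degree_prod_eq_sum_degree; simp)+
  have "coeff ?P ?k = lead_coeff ?P" using deg_P by simp
  then have "coeff ?P ?k = ?\<beta>" unfolding lead_coeff_prod using nz by simp
  have "coeff ?R ?k = lead_coeff ?R" using deg_R by simp
  then have "coeff ?R ?k = 1" unfolding lead_coeff_prod by simp
  show ?thesis
  proof (rule poly_eqI_degree_lead_coeff[where n = ?k and A = "range (($) a)"])
    show "coeff (?H + smult ?\<beta> ?R) ?k = coeff ?P ?k"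
      using \<open>coeff ?P ?k = ?\<beta>\<close> \<open>coeff ?R ?k = 1\<close> degree_cauchy_interpolant_less[of a w]
      by (simp add: coeff_eq_0)
    show "?k \<le> card (range (($) a))" using inj by (simp add: card_image)
    show "degree (?H + smult ?\<beta> ?R) \<le> ?k"
      using degree_cauchy_interpolant_less[of a w] deg_R degree_smult_le[of ?\<beta> ?R]
        degree_add_le[of ?H ?k "smult ?\<beta> ?R"] by linarith
  next
    fix z assume "z \<in> range (($) a)"
    then obtain j where z: "z = a$j" by auto
    have "poly ?R z = 0" unfolding z poly_prod by (intro prod_zero) auto
    then show "poly (?H + smult ?\<beta> ?R) z = poly ?P z"
      using poly_cauchy_interpolant_node[OF lt w, of j] by (simp add: z poly_prod mult.commute)
  qed (use deg_P in simp)
qed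

lemma cauchy_system_solution_sum:
  fixes a w :: "real^'k"
  assumes lt: "\<And>i. \<bar>a$i\<bar> < 1" and inj: "inj (($) a)" and nz: "\<And>i. a$i \<noteq> 0"
    and w: "\<And>j. (\<Sum>i\<in>UNIV. w$i / (1 - a$j * a$i)) = 1"
  shows "(\<Sum>i\<in>UNIV. w$i) = 1 - (\<Prod>i\<in>UNIV. a$i)\<^sup>2"
proof -
  have "poly (cauchy_interpolant a w) 0 + (\<Prod>l\<in>UNIV. - a$l) * poly (\<Prod>l\<in>UNIV. [:- a$l, 1:]) 0
      = poly (\<Prod>l\<in>UNIV. [:1, - a$l:]) 0"
    using arg_cong[OF cauchy_interpolant_identity[OF lt inj nz w], of "\<lambda>q. poly q 0"] by simp
  moreover have "(\<Prod>l\<in>UNIV. - a$l) * (\<Prod>l\<in>UNIV. - a$l) = (\<Prod>i\<in>UNIV. a$i)\<^sup>2"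
    by (simp only: prod_power_distrib power2_minus power2_eq_square[symmetric])
  ultimately show ?thesis by (simp add: cauchy_interpolant_def poly_sum poly_prod)
qed

lemma cauchy_pairing_solution:
  fixes a w y :: "real^'k"
  assumes w: "\<And>j. (\<Sum>i\<in>UNIV. w$i / (1 - a$j * a$i)) = 1"
  shows "(\<Sum>i\<in>UNIV. \<Sum>j\<in>UNIV. y$i * w$j / (1 - a$i * a$j)) = (\<Sum>i\<in>UNIV. y$i)"
proof -
  have "(\<Sum>i\<in>UNIV. \<Sum>j\<in>UNIV. y$i * w$j / (1 - a$i * a$j))
      = (\<Sum>i\<in>UNIV. y$i * (\<Sum>j\<in>UNIV. w$j / (1 - a$i * a$j)))"
    by (simp add: sum_distrib_left)
  then show ?thesis using w by simp
qed

lemma cauchy_form_solution: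
  assumes "\<And>j. (\<Sum>i\<in>UNIV. w$i / (1 - a$j * a$i)) = 1"
  shows "cauchy_form a w = (\<Sum>i\<in>UNIV. w$i)"
  using cauchy_pairing_solution[OF assms, of w] unfolding cauchy_form_def .

lemma sum_solution_pos:
  fixes a w :: "real^'k"
  assumes lt: "\<And>i. \<bar>a$i\<bar> < 1" and inj: "inj (($) a)"
    and w: "\<And>j. (\<Sum>i\<in>UNIV. w$i / (1 - a$j * a$i)) = 1"
  shows "(\<Sum>i\<in>UNIV. w$i) > 0"
proof -
  have "w \<noteq> 0" using w[of undefined] by auto
  then show ?thesis using cauchy_form_pos[OF lt inj] cauchy_form_solution[OF w] by metis
qed

lemma sum_sq_le_cauchy_form:
  fixes a w x :: "real^'k"
  assumes lt: "\<And>i. \<bar>a$i\<bar> < 1" and inj: "inj (($) a)"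
    and w: "\<And>j. (\<Sum>i\<in>UNIV. w$i / (1 - a$j * a$i)) = 1"
  shows "(\<Sum>i\<in>UNIV. x$i)\<^sup>2 \<le> (\<Sum>i\<in>UNIV. w$i) * cauchy_form a x"
proof -
  define s where "s = (\<Sum>i\<in>UNIV. w$i)"
  have s_pos: "s > 0" unfolding s_def by (rule sum_solution_pos[OF lt inj w])
  have "cauchy_form a (x - t *\<^sub>R w) = cauchy_form a x
      - t * (\<Sum>i\<in>UNIV. \<Sum>j\<in>UNIV. x$i * w$j / (1 - a$i * a$j))
      - t * (\<Sum>i\<in>UNIV. \<Sum>j\<in>UNIV. w$i * x$j / (1 - a$i * a$j)) + t\<^sup>2 * cauchy_form a w" for t
    unfolding cauchy_form_def
    by (simp add: sum_subtractf sum.distrib sum_distrib_left algebra_simps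
        power2_eq_square diff_divide_distrib add_divide_distrib)
  moreover have "(\<Sum>i\<in>UNIV. \<Sum>j\<in>UNIV. w$i * x$j / (1 - a$i * a$j))
      = (\<Sum>i\<in>UNIV. \<Sum>j\<in>UNIV. x$i * w$j / (1 - a$i * a$j))"
    by (subst sum.swap) (simp add: mult.commute)
  ultimately have expand: "cauchy_form a (x - t *\<^sub>R w) = cauchy_form a x - 2 * t * (\<Sum>i\<in>UNIV. x$i) + t\<^sup>2 * s" for t
    using cauchy_pairing_solution[OF w, of x] cauchy_form_solution[OF w] by (simp add: s_def mult_ac)
  define t where "t = (\<Sum>i\<in>UNIV. x$i) / s"
  have "0 \<le> cauchy_form a (x - t *\<^sub>R w)" by (rule cauchy_form_nonneg[OF lt])
  also have "\<dots> = cauchy_form a x - (\<Sum>i\<in>UNIV. x$i)\<^sup>2 / s"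
    unfolding expand t_def using s_pos by (simp add: field_simps power2_eq_square)
  finally show ?thesis
    using s_pos by (simp add: s_def field_simps)
qed

lemma sum_sq_less_cauchy_form_iff:
  fixes a :: "real^'k"
  assumes lt: "\<And>i. \<bar>a$i\<bar> < 1" and inj: "inj (($) a)" and nz: "\<And>i. a$i \<noteq> 0"
  shows "(\<forall>x. x \<noteq> 0 \<longrightarrow> (\<Sum>i\<in>UNIV. x$i)\<^sup>2 < e * cauchy_form a x) \<longleftrightarrow> 1 - (\<Prod>i\<in>UNIV. a$i)\<^sup>2 < e"
proof -
  obtain w where w: "\<And>j. (\<Sum>i\<in>UNIV. w$i / (1 - a$j * a$i)) = 1"
    using cauchy_system_solvable[OF lt inj] by blast
  define s where "s = (\<Sum>i\<in>UNIV. w$i)"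
  have s: "s = 1 - (\<Prod>i\<in>UNIV. a$i)\<^sup>2"
    unfolding s_def by (rule cauchy_system_solution_sum[OF lt inj nz w])
  have s_pos: "s > 0" unfolding s_def by (rule sum_solution_pos[OF lt inj w])
  show ?thesis
  proof
    assume "\<forall>x. x \<noteq> 0 \<longrightarrow> (\<Sum>i\<in>UNIV. x$i)\<^sup>2 < e * cauchy_form a x"
    moreover have "w \<noteq> 0" using s_pos by (auto simp: s_def)
    ultimately have "s\<^sup>2 < e * cauchy_form a w" unfolding s_def by blast
    then have "s * s < e * s" using cauchy_form_solution[OF w] by (simp add: s_def power2_eq_square)
    then show "1 - (\<Prod>i\<in>UNIV. a$i)\<^sup>2 < e" using s_pos s by simp
  next
    assume "1 - (\<Prod>i\<in>UNIV. a$i)\<^sup>2 < e"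
    then have "s * cauchy_form a x < e * cauchy_form a x" if "x \<noteq> 0" for x
      using cauchy_form_pos[OF lt inj that] s by simp
    then show "\<forall>x. x \<noteq> 0 \<longrightarrow> (\<Sum>i\<in>UNIV. x$i)\<^sup>2 < e * cauchy_form a x"
      using sum_sq_le_cauchy_form[OF lt inj w] unfolding s_def by (meson le_less_trans)
  qed
qed

lemma diag_mat_mult_nth: "(diag_mat u ** X) $ i $ j = u$i * X$i$j"
proof -
  have "(diag_mat u ** X) $ i $ j = (\<Sum>k\<in>UNIV. (if i = k then u$i else 0) * X$k$j)"
    unfolding matrix_matrix_mult_def diag_mat_def by simp
  also have "\<dots> = (\<Sum>k\<in>UNIV. if i = k then u$i * X$k$j else 0)"
    by (rule sum.cong) auto
  finally show ?thesis by simp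
qed

lemma mult_diag_mat_nth: "(X ** diag_mat u) $ i $ j = X$i$j * u$j"
proof -
  have "(X ** diag_mat u) $ i $ j = (\<Sum>k\<in>UNIV. X$i$k * (if k = j then u$k else 0))"
    unfolding matrix_matrix_mult_def diag_mat_def by simp
  also have "\<dots> = (\<Sum>k\<in>UNIV. if k = j then X$i$k * u$j else 0)"
    by (rule sum.cong) auto
  finally show ?thesis by simp
qed

lemma transpose_diag_mat: "transpose (diag_mat u) = diag_mat u"
  unfolding transpose_def diag_mat_def by (simp add: vec_eq_iff)

lemma diag_mat_mult_diag_mat: "diag_mat u ** diag_mat v = diag_mat (\<chi> i. u$i * v$i)"
  by (simp add: vec_eq_iff diag_mat_mult_nth) (simp add: diag_mat_def)

lemma diag_mat_1: "diag_mat (\<chi> i. 1) = mat 1"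
  by (simp add: vec_eq_iff diag_mat_def mat_def)

lemma matrix_inv_diag_mat:
  fixes u :: "real^'k"
  assumes "\<And>i. u$i \<noteq> 0"
  shows "matrix_inv (diag_mat u) = diag_mat (\<chi> i. inverse (u$i))"
proof -
  let ?A = "diag_mat u" and ?B = "diag_mat (\<chi> i. inverse (u$i))"
  have AB: "?A ** ?B = mat 1" and BA: "?B ** ?A = mat 1"
    using assms by (simp_all add: diag_mat_mult_diag_mat diag_mat_1[symmetric])
  show ?thesis unfolding matrix_inv_def
  proof (rule some_equality)
    fix A' assume "?A ** A' = mat 1 \<and> A' ** ?A = mat 1"
    then have "A' = A' ** (?A ** ?B)" "A' ** ?A = mat 1" using AB by auto
    then show "A' = ?B" by (simp add: matrix_mul_assoc)
  qed (use AB BA in simp)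
qed

lemma det_diag_mat: "det (diag_mat u) = (\<Prod>i\<in>UNIV. u$i)"
  by (subst det_diagonal) (simp_all add: diag_mat_def)

lemma stein_equation_diag_nth:
  fixes a :: "real^'k"
  assumes lt: "\<And>i. \<bar>a$i\<bar> < 1"
    and X: "X = diag_mat a ** X ** transpose (diag_mat a) + C"
  shows "X$i$j = C$i$j / (1 - a$i * a$j)"
proof -
  have "X$i$j = a$i * X$i$j * a$j + C$i$j"
    by (subst X) (simp add: transpose_diag_mat diag_mat_mult_nth mult_diag_mat_nth)
  then have "X$i$j * (1 - a$i * a$j) = C$i$j" by (simp add: algebra_simps)
  then show ?thesis using one_minus_mult_pos[OF lt, of i j] by (simp add: field_simps)
qed

lemma pos_def_diag_sandwich_iff:
  fixes a g :: "real^'k" and K :: "real^'k^'k"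
  assumes lt: "\<And>i. \<bar>a$i\<bar> < 1" and inj: "inj (($) a)" and nz: "\<And>i. a$i \<noteq> 0"
    and g: "\<And>i. g$i \<noteq> 0" and K: "\<And>i j. K$i$j = 1 / (1 - a$i * a$j)"
  shows "pos_def (diag_mat g ** (e *\<^sub>R K - ones_mat) ** diag_mat g) \<longleftrightarrow> 1 - (\<Prod>i\<in>UNIV. a$i)\<^sup>2 < e"
proof -
  let ?J = "diag_mat g ** (e *\<^sub>R K - ones_mat) ** diag_mat g"
  let ?y = "\<lambda>x. \<chi> i. g$i * x$i"
  have J: "?J$i$j = g$i * g$j * (e / (1 - a$i * a$j) - 1)" for i j
    by (simp add: diag_mat_mult_nth mult_diag_mat_nth K ones_mat_def)
  have "transpose ?J = ?J"
    by (simp add: vec_eq_iff transpose_def J mult_ac)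
  moreover have form: "x \<bullet> (?J *v x) = e * cauchy_form a (?y x) - (\<Sum>i\<in>UNIV. ?y x $ i)\<^sup>2" for x
    unfolding inner_vec_def matrix_vector_mult_def cauchy_form_def power2_eq_square sum_product
    by (simp add: J sum_distrib_left sum_subtractf algebra_simps)
  moreover have "(\<forall>x. x \<noteq> 0 \<longrightarrow> P (?y x)) \<longleftrightarrow> (\<forall>y. y \<noteq> 0 \<longrightarrow> P y)" for P
  proof -
    have "?y (\<chi> i. y$i / g$i) = y" for y using g by (simp add: vec_eq_iff)
    moreover have "?y x \<noteq> 0 \<longleftrightarrow> x \<noteq> 0" for x using g by (simp add: vec_eq_iff)
    ultimately show ?thesis by metis
  qed
  ultimately have "pos_def ?J \<longleftrightarrow>
      (\<forall>x. x \<noteq> 0 \<longrightarrow> (\<Sum>i\<in>UNIV. ?y x $ i)\<^sup>2 < e * cauchy_form a (?y x))"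
    unfolding pos_def_def form by auto
  also have "\<dots> \<longleftrightarrow> (\<forall>y. y \<noteq> 0 \<longrightarrow> (\<Sum>i\<in>UNIV. y $ i)\<^sup>2 < e * cauchy_form a y)"
    by fact
  also have "\<dots> \<longleftrightarrow> 1 - (\<Prod>i\<in>UNIV. a$i)\<^sup>2 < e"
    by (rule sum_sq_less_cauchy_form_iff[OF lt inj nz])
  finally show ?thesis .
qed

lemma stein_equation_sandwich_nth:
  fixes a g :: "real^'k"
  assumes lt: "\<And>i. \<bar>a$i\<bar> < 1"
    and J: "J = diag_mat a ** J ** transpose (diag_mat a) - c *\<^sub>R outer g g
              + diag_mat a ** outer g g ** transpose (diag_mat a)"
  shows "J$i$j = g$i * g$j * ((1 - c) / (1 - a$i * a$j) - 1)"
proof -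
  have "J = diag_mat a ** J ** transpose (diag_mat a)
      + (diag_mat a ** outer g g ** transpose (diag_mat a) - c *\<^sub>R outer g g)"
    using J by (simp add: algebra_simps)
  from stein_equation_diag_nth[OF lt this]
  have "J$i$j = g$i * g$j * (a$i * a$j - c) / (1 - a$i * a$j)"
    by (simp add: diag_mat_mult_nth mult_diag_mat_nth transpose_diag_mat outer_def algebra_simps)
  moreover have "1 - a$i * a$j \<noteq> 0" using one_minus_mult_pos[OF lt, of i j] by simp
  ultimately show ?thesis by (simp add: field_simps)
qed

lemma one_minus_sq_prod_inverse_less_iff:
  fixes u :: "real^'k"
  assumes "\<And>i. u$i \<noteq> 0" and "d > 0"
  shows "1 - (\<Prod>i\<in>UNIV. inverse (u$i))\<^sup>2 < 1 - 1 / d \<longleftrightarrow> (\<Prod>i\<in>UNIV. u$i)\<^sup>2 < d"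
proof -
  have "(\<Prod>i\<in>UNIV. inverse (u$i)) = inverse (\<Prod>i\<in>UNIV. u$i)"
    using prod_inversef[of "\<lambda>i. u$i" UNIV] by (simp add: comp_def)
  moreover have "(\<Prod>i\<in>UNIV. u$i)\<^sup>2 > 0" using assms(1) by simp
  ultimately show ?thesis using assms(2) by (simp add: power_inverse inverse_eq_divide[symmetric])
qed

lemma sq_prod_less_iff_sum_ln_less:
  fixes u :: "real^'k"
  assumes "\<And>i. u$i \<noteq> 0" and "d > 0"
  shows "(\<Prod>i\<in>UNIV. u$i)\<^sup>2 < d \<longleftrightarrow> (\<Sum>i\<in>UNIV. ln \<bar>u$i\<bar>) < ln d / 2"
proof -
  have "(\<Prod>i\<in>UNIV. u$i)\<^sup>2 = (\<Prod>i\<in>UNIV. \<bar>u$i\<bar>)\<^sup>2" by (simp add: abs_prod[symmetric])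
  moreover have "ln ((\<Prod>i\<in>UNIV. \<bar>u$i\<bar>)\<^sup>2) = 2 * (\<Sum>i\<in>UNIV. ln \<bar>u$i\<bar>)"
    using assms(1) by (simp add: ln_realpow ln_prod)
  moreover have "(\<Prod>i\<in>UNIV. \<bar>u$i\<bar>)\<^sup>2 > 0" using assms(1) by simp
  moreover have "x < d \<longleftrightarrow> ln x < ln d" if "x > 0" for x
    using that assms(2) by simp
  ultimately show ?thesis by (simp add: mult.commute)
qed

theorem mainTheorem6:
  fixes lam :: "real^'k" and g :: "real^'k" and h p :: real
    and J M :: "real^'k^'k"
  assumes distinct: "inj (\<lambda>i. lam $ i)"
    and big: "\<And>i. \<bar>lam $ i\<bar> > 1"
    and h: "h \<noteq> 0" and p: "p \<ge> 0"
    and g: "\<And>i. g $ i \<noteq> 0"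
    and J: "J = matrix_inv (diag_mat lam) ** J ** transpose (matrix_inv (diag_mat lam))
              - (1 / (1 + h\<^sup>2 * p)) *\<^sub>R outer g g
              + matrix_inv (diag_mat lam) ** outer g g ** transpose (matrix_inv (diag_mat lam))"
    and J_unique: "\<And>X. X = matrix_inv (diag_mat lam) ** X ** transpose (matrix_inv (diag_mat lam))
              - (1 / (1 + h\<^sup>2 * p)) *\<^sub>R outer g g
              + matrix_inv (diag_mat lam) ** outer g g ** transpose (matrix_inv (diag_mat lam))
              \<Longrightarrow> X = J"
    and M: "M = matrix_inv (diag_mat lam) ** M ** transpose (matrix_inv (diag_mat lam)) + ones_mat"
  shows "J = diag_mat g ** ((h\<^sup>2 * p / (1 + h\<^sup>2 * p)) *\<^sub>R M - ones_mat) ** diag_mat g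
         \<and> (pos_def J \<longleftrightarrow> 1 + h\<^sup>2 * p > \<bar>det (diag_mat lam)\<bar>\<^sup>2)
         \<and> (1 + h\<^sup>2 * p > \<bar>det (diag_mat lam)\<bar>\<^sup>2 \<longleftrightarrow>
              (\<Sum>j\<in>UNIV. ln \<bar>lam $ j\<bar>) < ln (1 + h\<^sup>2 * p) / 2)"
proof -
  define a :: "real^'k" where "a = (\<chi> i. inverse (lam$i))"
  define d where "d = 1 + h\<^sup>2 * p"
  have d: "d \<ge> 1" using p by (simp add: d_def)
  have "h\<^sup>2 * p = d - 1" by (simp add: d_def)
  with d have e: "h\<^sup>2 * p / d = 1 - 1 / d" by (simp add: field_simps)
  have lam_nz: "lam$i \<noteq> 0" for i using big[of i] by auto
  have a_lt: "\<bar>a$i\<bar> < 1" for i using big[of i] by (simp add: a_def inverse_less_1_iff)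
  have a_nz: "a$i \<noteq> 0" for i using lam_nz by (simp add: a_def)
  have a_inj: "inj (($) a)" using distinct by (simp add: a_def inj_def)
  have inv: "matrix_inv (diag_mat lam) = diag_mat a"
    unfolding a_def by (rule matrix_inv_diag_mat[OF lam_nz])
  have M_nth: "M$i$j = 1 / (1 - a$i * a$j)" for i j
    using stein_equation_diag_nth[OF a_lt M[unfolded inv]] by (simp add: ones_mat_def)
  have "J$i$j = g$i * g$j * ((h\<^sup>2 * p / d) / (1 - a$i * a$j) - 1)" for i j
    using stein_equation_sandwich_nth[OF a_lt J[unfolded inv, folded d_def]] by (simp add: e)
  then have formula: "J = diag_mat g ** ((h\<^sup>2 * p / d) *\<^sub>R M - ones_mat) ** diag_mat g"
    by (simp add: vec_eq_iff diag_mat_mult_nth mult_diag_mat_nth M_nth ones_mat_def mult_ac)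
  have "pos_def J \<longleftrightarrow> (\<Prod>i\<in>UNIV. lam$i)\<^sup>2 < d"
    unfolding formula pos_def_diag_sandwich_iff[OF a_lt a_inj a_nz g M_nth] e a_def
    using one_minus_sq_prod_inverse_less_iff[OF lam_nz] d by simp
  then show ?thesis
    using formula sq_prod_less_iff_sum_ln_less[OF lam_nz, of d] d by (simp add: det_diag_mat d_def)
qed

end
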